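(* Let $n$ be a nonnegative integer and let $x$ be a complex number such that no denominator below vanishes. Then \[ \sum_{k=0}^{n}(-1)^k\binom{n}{k} \frac{\binom{\frac{x}{2}+k}{k}\binom{x-\frac{1}{2}+k}{k}}{\binom{\frac{x-1}{2}+k}{k}\binom{x-\frac{1}{2}+n+k}{k}}H_{2k}(x) =4^{n-1}\frac{\binom{\frac{x}{2}-\frac{1}{4}+n}{n}\binom{-\frac{3}{4}+n}{n}}{\binom{\frac{x-1}{2}+n}{n}\binom{x-\frac{1}{2}+2n}{n}} \big\{H_n(\tfrac{x-1}{2})-H_n(-\tfrac{3}{4})\big\} +4^{n-1}\frac{\binom{\frac{x}{2}-\frac{3}{4}+n}{n}\binom{-\frac{5}{4}+n}{n}}{\binom{\frac{x-1}{2}+n}{n}\binom{x-\frac{1}{2}+2n}{n}} \big\{H_n(\tfrac{x-1}{2})-H_n(-\tfrac{5}{4})\big\}. \]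
   Context: For complex $z$ and a nonnegative integer $k$, $\binom{z}{k}=\frac{z(z-1)\cdots(z-k+1)}{k!}$ (with $\binom{z}{0}=1$). For complex $x$ and nonnegative integer $m$, $H_0(x)=0$ and $H_m(x)=\sum_{j=1}^m\frac{1}{x+j}$ for $m\ge1$. The parameter $x$ is assumed to be such that all denominators are nonzero. *)

theory Defs
  imports Complex_Main
begin

definition H :: "nat \<Rightarrow> complex \<Rightarrow> complex" where
  "H m x = (\<Sum>j=1..m. 1 / (x + of_nat j))"

end

theory Submission
  imports Defs
begin

(*
  Put c = x + 1/2 and u = (x + 1)/2. Then the summand of the theorem is the k-th term of the
  terminating series 3F2(-n, c + 1 - u, c; u, c + n; 1) times H_{2k}(x), and H_{2k}(x) is half the
  logarithmic derivative of that term when u is replaced by u - e, which moves the parameters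
  c + 1 - u and u in opposite directions. The series has the closed form

    4^n/2 * (((c + 1)/2)_n (u - c/2)_n + (c/2)_n (u - (c + 1)/2)_n) / ((u)_n (c + n)_n),

  and the logarithmic derivatives of its two parts produce the two harmonic differences of the
  right-hand side. The closed form comes from splitting the factor (c + n + k)/(c + n) relating
  the series to a companion series with c + 1 + n in the denominator: the companion series and
  its (c + 2k)-weighted version satisfy first-order recurrences in n, proved by creative
  telescoping with an explicit certificate. This proves the closed form for generic c, and
  continuity in c removes the genericity.
*)

lemma pochhammer_shift_mult: "a * pochhammer (a + 1) k = pochhammer a k * (a + of_nat k)"
  by (metis pochhammer_Suc pochhammer_rec)

lemma pochhammer_neq_0_iff:
  "pochhammer (a :: 'a :: field_char_0) n \<noteq> 0 \<longleftrightarrow> (\<forall>k<n. a + of_nat k \<noteq> 0)"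
  by (auto simp: pochhammer_eq_0_iff add_eq_0_iff)

lemma mult_divide_mult_cancel_2: "a * (2 * x) / (2 * y * w) = a * x / (y * w :: 'a :: field_char_0)"
  by simp

lemma divide_mult_mult_mult:
  fixes a b c d e f g h :: "'a :: field"
  shows "(a * b) * (c * d) / ((e * f) * (g * h)) = a * c / (e * g) * (b * d / (f * h))"
  by (simp add: times_divide_times_eq mult_ac)

lemma pochhammer_double_quarter:
  "pochhammer (a :: 'a :: field_char_0) (2 * n) = 4 ^ n * pochhammer (a / 2) n * pochhammer (a / 2 + 1 / 2) n"
  using pochhammer_double[of "a / 2" n] by (simp add: power_mult)

lemma pochhammer_shift_double:
  fixes c :: "'a :: field_char_0"
  shows "c * pochhammer (c + 1) n * pochhammer (c + of_nat n) n =
     4 ^ n * pochhammer (c / 2) n * pochhammer (c / 2 + 1 / 2) n * (c + of_nat n)"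
proof -
  have "c * pochhammer (c + 1) n * pochhammer (c + of_nat n) n = pochhammer c n * pochhammer (c + of_nat n) n * (c + of_nat n)"
    by (simp add: pochhammer_shift_mult mult_ac)
  also have "pochhammer c n * pochhammer (c + of_nat n) n = pochhammer c (2 * n)"
    by (simp add: pochhammer_product' mult_2)
  finally show ?thesis
    by (simp add: pochhammer_double_quarter)
qed

lemma pochhammer_shift_double':
  fixes c :: "'a :: field_char_0"
  shows "(c + 2 * of_nat n) * pochhammer (c + 1) n * pochhammer (c + of_nat n) n =
     4 ^ n * pochhammer (c / 2 + 1 / 2) n * pochhammer (c / 2 + 1) n * (c + of_nat n)"
proof -
  have "(c + 2 * of_nat n) * pochhammer (c + of_nat n) n = (c + of_nat n) * pochhammer (c + 1 + of_nat n) n"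
    using pochhammer_shift_mult[of "c + of_nat n" n] by (simp add: algebra_simps)
  then have "(c + 2 * of_nat n) * pochhammer (c + 1) n * pochhammer (c + of_nat n) n =
      pochhammer (c + 1) n * pochhammer (c + 1 + of_nat n) n * (c + of_nat n)"
    by (simp add: mult_ac)
  also have "pochhammer (c + 1) n * pochhammer (c + 1 + of_nat n) n = pochhammer (c + 1) (2 * n)"
    by (simp add: pochhammer_product' mult_2)
  also have "\<dots> = 4 ^ n * pochhammer ((c + 1) / 2) n * pochhammer ((c + 1) / 2 + 1 / 2) n"
    by (rule pochhammer_double_quarter)
  also have "(c + 1) / 2 = c / 2 + 1 / 2"
    by (simp add: field_simps)
  finally show ?thesis
    by (simp add: add.assoc)
qed

lemma gbinomial_add_of_nat: "(a + of_nat k) gchoose k = pochhammer (a + 1) k / (fact k :: 'a :: field_char_0)"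
  by (simp add: gbinomial_pochhammer')

lemma gchoose_quotient:
  fixes a b c d :: "'a :: field_char_0"
  shows "s * (((a + of_nat k) gchoose k) * ((b + of_nat k) gchoose k)) / (((c + of_nat k) gchoose k) * ((d + of_nat k) gchoose k)) =
    s * (pochhammer (a + 1) k * pochhammer (b + 1) k) / (pochhammer (c + 1) k * pochhammer (d + 1) k)"
  by (simp add: gbinomial_add_of_nat divide_simps)

lemma minus_one_power_binomial:
  "(-1) ^ k * of_nat (n choose k) = (pochhammer (- of_nat n) k / fact k :: 'a :: field_char_0)"
  by (simp add: binomial_gbinomial gbinomial_pochhammer flip: power_mult_distrib)

lemma sum_telescoping_recurrence:
  fixes f g G :: "nat \<Rightarrow> 'a :: comm_ring"
  assumes "\<And>k. k \<le> Suc n \<Longrightarrow> g k = r * f k + s * (G (Suc k) - G k)"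
    and "f (Suc n) = 0" "G 0 = 0" "G (Suc (Suc n)) = 0"
  shows "(\<Sum>k=0..Suc n. g k) = r * (\<Sum>k=0..n. f k)"
proof -
  have "(\<Sum>k=0..Suc n. g k) = (\<Sum>k=0..Suc n. r * f k + s * (G (Suc k) - G k))"
    using assms(1) by (intro sum.cong) auto
  also have "\<dots> = r * (\<Sum>k=0..Suc n. f k) + s * (\<Sum>k=0..Suc n. G (Suc k) - G k)"
    by (simp only: sum.distrib sum_distrib_left)
  also have "(\<Sum>k=0..Suc n. G (Suc k) - G k) = 0"
    using assms(3,4) by (simp add: sum_Suc_diff)
  finally show ?thesis
    using assms(2) by simp
qed

lemma isCont_eq_off_finite:
  fixes f g :: "'a :: {t2_space, perfect_space} \<Rightarrow> 'b :: t2_space"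
  assumes "isCont f z" "isCont g z" "finite B" "\<And>w. w \<notin> B \<Longrightarrow> f w = g w"
  shows "f z = g z"
proof -
  have "open (- (B - {z}))"
    using assms(3) by (intro open_Compl finite_imp_closed) simp
  then have "eventually (\<lambda>w. w \<in> - (B - {z}) - {z}) (at z)"
    by (rule eventually_at_in_open) simp
  then have "eventually (\<lambda>w. f w = g w) (at z)"
    by (rule eventually_mono) (use assms(4) in auto)
  with assms(1) have "(g \<longlongrightarrow> f z) (at z)"
    unfolding isCont_def by (rule Lim_transform_eventually)
  with assms(2) show ?thesis
    unfolding isCont_def by (rule tendsto_unique[OF at_neq_bot, rotated])
qed

definition hg_term :: "complex \<Rightarrow> complex \<Rightarrow> nat \<Rightarrow> nat \<Rightarrow> complex" where
  "hg_term c u n k = pochhammer (- of_nat n) k * pochhammer (c + 1 - u) k * pochhammer c k /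
     (fact k * pochhammer u k * pochhammer (c + 1 + of_nat n) k)"

lemma hg_term_eq_0: "n < k \<Longrightarrow> hg_term c u n k = 0"
  unfolding hg_term_def by (simp add: pochhammer_of_nat_eq_0_lemma)

lemma hg_term_Suc:
  "hg_term c u n (Suc k) = hg_term c u n k *
     ((of_nat k - of_nat n) * (c + 1 - u + of_nat k) * (c + of_nat k) /
      ((of_nat k + 1) * (u + of_nat k) * (c + 1 + of_nat n + of_nat k)))"
  unfolding hg_term_def pochhammer_Suc
  by (cases "u + of_nat k = 0"; cases "c + 1 + of_nat n + of_nat k = 0")
     (simp_all add: field_simps)

lemma hg_term_Suc_param:
  assumes "c + 1 + of_nat n \<noteq> 0" "c + 1 + of_nat n + of_nat k \<noteq> 0"
  shows "hg_term c u n k = hg_term c u (Suc n) k *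
     ((of_nat n + 1 - of_nat k) * (c + 1 + of_nat n + of_nat k) / ((of_nat n + 1) * (c + 1 + of_nat n)))"
proof -
  have n1: "(of_nat n + 1 :: complex) \<noteq> 0" by (metis of_nat_Suc of_nat_neq_0 add.commute)
  have "(- of_nat (Suc n) :: complex) + 1 = - of_nat n" by simp
  from pochhammer_shift_mult[of "- of_nat (Suc n) :: complex" k, unfolded this]
  have e1: "pochhammer (- of_nat n) k =
      (of_nat n + 1 - of_nat k) * pochhammer (- of_nat (Suc n) :: complex) k / (of_nat n + 1)"
    using n1 by (simp add: field_simps)
  have "pochhammer (c + 1 + of_nat n) k * (c + 1 + of_nat n + of_nat k) = (c + 1 + of_nat n) * pochhammer (c + 1 + of_nat (Suc n)) k"
    using pochhammer_shift_mult[of "c + 1 + of_nat n" k] by (simp add: algebra_simps)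
  then have e2: "pochhammer (c + 1 + of_nat n) k =
      (c + 1 + of_nat n) * pochhammer (c + 1 + of_nat (Suc n)) k / (c + 1 + of_nat n + of_nat k)"
    using assms(2) by (simp add: field_simps)
  show ?thesis
    using assms n1 unfolding hg_term_def e1 e2
    by (cases "pochhammer (c + 1 + of_nat (Suc n)) k = 0") (simp_all add: field_simps)
qed

(* Zeilberger's certificate for the recurrences of hg_term in n. *)
definition hg_cert :: "complex \<Rightarrow> complex \<Rightarrow> nat \<Rightarrow> nat \<Rightarrow> complex" where
  "hg_cert c u n k = hg_term c u (Suc n) k *
     (of_nat k * (u + of_nat k - 1) * (c + 1 + of_nat n + of_nat k) / (c + 1 + of_nat n))"

lemma hg_cert_Suc:
  assumes "k \<le> n \<Longrightarrow> u + of_nat k \<noteq> 0" "k \<le> n \<Longrightarrow> c + 2 + of_nat n + of_nat k \<noteq> 0"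
  shows "hg_cert c u n (Suc k) = hg_term c u (Suc n) k *
     ((of_nat k - of_nat n - 1) * (c + 1 - u + of_nat k) * (c + of_nat k) / (c + 1 + of_nat n))"
proof (cases "k \<le> n")
  case True
  define D where "D = (of_nat k + 1) * (u + of_nat k) * (c + 1 + of_nat (Suc n) + of_nat k)"
  have "(of_nat k + 1 :: complex) \<noteq> 0"
    by (metis of_nat_Suc of_nat_neq_0 add.commute)
  moreover have "c + 1 + of_nat (Suc n) + of_nat k \<noteq> 0"
    using assms(2) True by (simp add: add_ac)
  ultimately have "D \<noteq> 0"
    using assms(1) True unfolding D_def by simp
  have "hg_cert c u n (Suc k) = hg_term c u (Suc n) (Suc k) * (D / (c + 1 + of_nat n))"
    unfolding hg_cert_def D_def by (simp add: algebra_simps)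
  also have "\<dots> = hg_term c u (Suc n) k * ((of_nat k - of_nat (Suc n)) * (c + 1 - u + of_nat k) * (c + of_nat k) / D) *
      (D / (c + 1 + of_nat n))"
    unfolding hg_term_Suc[of c u "Suc n" k] D_def ..
  also have "\<dots> = hg_term c u (Suc n) k * ((of_nat k - of_nat (Suc n)) * (c + 1 - u + of_nat k) * (c + of_nat k) /
      (c + 1 + of_nat n))"
    using \<open>D \<noteq> 0\<close> by simp
  finally show ?thesis
    by (simp add: algebra_simps)
next
  case False
  then consider "k = Suc n" | "Suc n < k" by linarith
  then show ?thesis
    by cases (simp_all add: hg_cert_def hg_term_eq_0)
qed

lemma hg_term_ratios:
  assumes c: "\<And>j. j \<le> 2 * n + 2 \<Longrightarrow> c + of_nat j \<noteq> 0" and u: "\<And>j. j \<le> n \<Longrightarrow> u + of_nat j \<noteq> 0"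
    and k: "k \<le> Suc n"
  shows "hg_term c u n k = hg_term c u (Suc n) k *
      ((of_nat n + 1 - of_nat k) * (c + 1 + of_nat n + of_nat k) / ((of_nat n + 1) * (c + 1 + of_nat n)))"
    "hg_cert c u n (Suc k) = hg_term c u (Suc n) k *
      ((of_nat k - of_nat n - 1) * (c + 1 - u + of_nat k) * (c + of_nat k) / (c + 1 + of_nat n))"
proof -
  have "c + of_nat (n + 1) \<noteq> 0" "c + of_nat (n + 1 + k) \<noteq> 0"
    using c[of "n + 1"] c[of "n + 1 + k"] k by simp_all
  then show "hg_term c u n k = hg_term c u (Suc n) k *
      ((of_nat n + 1 - of_nat k) * (c + 1 + of_nat n + of_nat k) / ((of_nat n + 1) * (c + 1 + of_nat n)))"
    by (intro hg_term_Suc_param) (simp_all add: algebra_simps)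
  have "c + 2 + of_nat n + of_nat k \<noteq> 0" if "k \<le> n"
    using c[of "n + 2 + k"] that by (simp add: algebra_simps)
  with u show "hg_cert c u n (Suc k) = hg_term c u (Suc n) k *
      ((of_nat k - of_nat n - 1) * (c + 1 - u + of_nat k) * (c + of_nat k) / (c + 1 + of_nat n))"
    by (intro hg_cert_Suc) simp_all
qed

lemma hg_term_recurrence:
  assumes c: "\<And>j. j \<le> 2 * n + 2 \<Longrightarrow> c + of_nat j \<noteq> 0" and u: "\<And>j. j \<le> n \<Longrightarrow> u + of_nat j \<noteq> 0"
    and k: "k \<le> Suc n"
  shows "hg_term c u (Suc n) k =
      (c + 1 + of_nat n) * (u - c / 2 + of_nat n) / ((c / 2 + 1 + of_nat n) * (u + of_nat n)) * hg_term c u n k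
      + - (c + 1 + of_nat n) / ((c + 2 + 2 * of_nat n) * (u + of_nat n) * (of_nat n + 1)) *
        (hg_cert c u n (Suc k) - hg_cert c u n k)"
proof -
  define N K where "N = (of_nat n :: complex)" and "K = (of_nat k :: complex)"
  have "c + 1 + N = c + of_nat (n + 1)" "c + 2 + 2 * N = c + of_nat (2 * n + 2)" "N + 1 = of_nat (Suc n)"
    unfolding N_def by (simp_all add: add_ac)
  then have nz: "c + 1 + N \<noteq> 0" "c + 2 + 2 * N \<noteq> 0" "N + 1 \<noteq> 0" "u + N \<noteq> 0"
    using c[of "n + 1"] c[of "2 * n + 2"] u[of n] unfolding N_def by (simp_all only: of_nat_eq_0_iff) simp_all
  define t where "t = hg_term c u (Suc n) k"
  define \<rho> where "\<rho> = (c + 1 + N) * (2 * u - c + 2 * N) / ((c + 2 + 2 * N) * (u + N))"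
  define \<gamma> where "\<gamma> = - (c + 1 + N) / ((c + 2 + 2 * N) * (u + N) * (N + 1))"
  define r1 r2 r3 where "r1 = (N + 1 - K) * (c + 1 + N + K) / ((N + 1) * (c + 1 + N))"
    and "r2 = K * (u + K - 1) * (c + 1 + N + K) / (c + 1 + N)"
    and "r3 = (K - N - 1) * (c + 1 - u + K) * (c + K) / (c + 1 + N)"
  have "2 * u - c + 2 * N = 2 * (u - c / 2 + N)" "c + 2 + 2 * N = 2 * (c / 2 + 1 + N)"
    by (simp_all add: algebra_simps)
  then have \<rho>_ratio: "\<rho> = (c + 1 + N) * (u - c / 2 + N) / ((c / 2 + 1 + N) * (u + N))"
    unfolding \<rho>_def by (simp only: mult_divide_mult_cancel_2)
  (* All terms are rational multiples of t, so the recurrence reduces to a rational identity. *)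
  have "\<rho> * r1 + \<gamma> * (r3 - r2) = 1"
    using nz unfolding \<rho>_def \<gamma>_def r1_def r2_def r3_def
    by (simp add: divide_simps) (simp add: algebra_simps)
  then have "t = \<rho> * (t * r1) + \<gamma> * (t * r3 - t * r2)"
    by (metis mult.right_neutral distrib_left right_diff_distrib mult.left_commute)
  also have "t * r1 = hg_term c u n k"
    unfolding t_def r1_def N_def K_def by (rule hg_term_ratios(1)[symmetric]) (use c u k in simp_all)
  also have "t * r3 = hg_cert c u n (Suc k)"
    unfolding t_def r3_def N_def K_def by (rule hg_term_ratios(2)[symmetric]) (use c u k in simp_all)
  also have "t * r2 = hg_cert c u n k"
    unfolding t_def r2_def N_def K_def hg_cert_def ..
  finally show ?thesis
    unfolding t_def \<rho>_ratio \<gamma>_def N_def K_def .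
qed

lemma weighted_hg_term_recurrence:
  assumes c: "\<And>j. j \<le> 2 * n + 2 \<Longrightarrow> c + of_nat j \<noteq> 0" and u: "\<And>j. j \<le> n \<Longrightarrow> u + of_nat j \<noteq> 0"
    and k: "k \<le> Suc n"
  shows "(c + 2 * of_nat k) * hg_term c u (Suc n) k =
      (c + 1 + of_nat n) * (u - c / 2 - 1 / 2 + of_nat n) / ((c / 2 + 1 / 2 + of_nat n) * (u + of_nat n)) *
        ((c + 2 * of_nat k) * hg_term c u n k)
      + - (c + 1 + of_nat n) / ((c + 1 + 2 * of_nat n) * (u + of_nat n) * (of_nat n + 1)) *
        ((2 * of_nat (Suc k) + c - 1) * hg_cert c u n (Suc k) - (2 * of_nat k + c - 1) * hg_cert c u n k)"
proof -
  define N K where "N = (of_nat n :: complex)" and "K = (of_nat k :: complex)"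
  have "c + 1 + N = c + of_nat (n + 1)" "c + 1 + 2 * N = c + of_nat (2 * n + 1)" "N + 1 = of_nat (Suc n)"
    unfolding N_def by (simp_all add: add_ac)
  then have nz: "c + 1 + N \<noteq> 0" "c + 1 + 2 * N \<noteq> 0" "N + 1 \<noteq> 0" "u + N \<noteq> 0"
    using c[of "n + 1"] c[of "2 * n + 1"] u[of n] unfolding N_def by (simp_all only: of_nat_eq_0_iff) simp_all
  define t where "t = hg_term c u (Suc n) k"
  define \<rho> where "\<rho> = (c + 1 + N) * (2 * u - c - 1 + 2 * N) / ((c + 1 + 2 * N) * (u + N))"
  define \<gamma> where "\<gamma> = - (c + 1 + N) / ((c + 1 + 2 * N) * (u + N) * (N + 1))"
  define r1 r2 r3 where "r1 = (N + 1 - K) * (c + 1 + N + K) / ((N + 1) * (c + 1 + N))"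
    and "r2 = K * (u + K - 1) * (c + 1 + N + K) / (c + 1 + N)"
    and "r3 = (K - N - 1) * (c + 1 - u + K) * (c + K) / (c + 1 + N)"
  have "2 * u - c - 1 + 2 * N = 2 * (u - c / 2 - 1 / 2 + N)" "c + 1 + 2 * N = 2 * (c / 2 + 1 / 2 + N)"
    by (simp_all add: algebra_simps)
  then have \<rho>_ratio: "\<rho> = (c + 1 + N) * (u - c / 2 - 1 / 2 + N) / ((c / 2 + 1 / 2 + N) * (u + N))"
    unfolding \<rho>_def by (simp only: mult_divide_mult_cancel_2)
  have "\<rho> * ((c + 2 * K) * r1) + \<gamma> * ((2 * K + 1 + c) * r3 - (2 * K + c - 1) * r2) = c + 2 * K"
    using nz unfolding \<rho>_def \<gamma>_def r1_def r2_def r3_def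
    by (simp add: divide_simps) (simp add: algebra_simps)
  then have "(c + 2 * K) * t = t * (\<rho> * ((c + 2 * K) * r1) + \<gamma> * ((2 * K + 1 + c) * r3 - (2 * K + c - 1) * r2))"
    by simp
  also have "\<dots> = \<rho> * ((c + 2 * K) * (t * r1)) + \<gamma> * ((2 * K + 1 + c) * (t * r3) - (2 * K + c - 1) * (t * r2))"
    by (simp add: algebra_simps)
  also have "t * r1 = hg_term c u n k"
    unfolding t_def r1_def N_def K_def by (rule hg_term_ratios(1)[symmetric]) (use c u k in simp_all)
  also have "t * r3 = hg_cert c u n (Suc k)"
    unfolding t_def r3_def N_def K_def by (rule hg_term_ratios(2)[symmetric]) (use c u k in simp_all)
  also have "t * r2 = hg_cert c u n k"
    unfolding t_def r2_def N_def K_def hg_cert_def ..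
  finally show ?thesis
    unfolding t_def \<rho>_ratio \<gamma>_def N_def K_def by (simp add: algebra_simps)
qed

lemma sum_hg_term:
  assumes "\<And>j. j \<le> 2 * n \<Longrightarrow> c + of_nat j \<noteq> 0" "\<And>j. j < n \<Longrightarrow> u + of_nat j \<noteq> 0"
  shows "(\<Sum>k=0..n. hg_term c u n k) =
    pochhammer (c + 1) n * pochhammer (u - c / 2) n / (pochhammer (c / 2 + 1) n * pochhammer u n)"
  using assms
proof (induction n)
  case 0
  then show ?case by (simp add: hg_term_def)
next
  case (Suc n)
  have hc: "\<And>j. j \<le> 2 * n + 2 \<Longrightarrow> c + of_nat j \<noteq> 0" and hu: "\<And>j. j \<le> n \<Longrightarrow> u + of_nat j \<noteq> 0"
    using Suc.prems by simp_all
  have "(\<Sum>k=0..Suc n. hg_term c u (Suc n) k) =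
      (c + 1 + of_nat n) * (u - c / 2 + of_nat n) / ((c / 2 + 1 + of_nat n) * (u + of_nat n)) *
      (\<Sum>k=0..n. hg_term c u n k)"
    by (rule sum_telescoping_recurrence, rule hg_term_recurrence)
       (use hc hu in \<open>simp_all add: hg_term_eq_0 hg_cert_def\<close>)
  also have "(\<Sum>k=0..n. hg_term c u n k) =
    pochhammer (c + 1) n * pochhammer (u - c / 2) n / (pochhammer (c / 2 + 1) n * pochhammer u n)"
    using Suc by simp
  finally show ?case
    by (simp only: pochhammer_Suc divide_mult_mult_mult mult.commute)
qed

lemma sum_weighted_hg_term:
  assumes "\<And>j. j \<le> 2 * n \<Longrightarrow> c + of_nat j \<noteq> 0" "\<And>j. j < n \<Longrightarrow> u + of_nat j \<noteq> 0"
  shows "(\<Sum>k=0..n. (c + 2 * of_nat k) * hg_term c u n k) =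
    c * (pochhammer (c + 1) n * pochhammer (u - c / 2 - 1 / 2) n / (pochhammer (c / 2 + 1 / 2) n * pochhammer u n))"
  using assms
proof (induction n)
  case 0
  then show ?case by (simp add: hg_term_def)
next
  case (Suc n)
  have hc: "\<And>j. j \<le> 2 * n + 2 \<Longrightarrow> c + of_nat j \<noteq> 0" and hu: "\<And>j. j \<le> n \<Longrightarrow> u + of_nat j \<noteq> 0"
    using Suc.prems by simp_all
  have "(\<Sum>k=0..Suc n. (c + 2 * of_nat k) * hg_term c u (Suc n) k) =
      (c + 1 + of_nat n) * (u - c / 2 - 1 / 2 + of_nat n) / ((c / 2 + 1 / 2 + of_nat n) * (u + of_nat n)) *
      (\<Sum>k=0..n. (c + 2 * of_nat k) * hg_term c u n k)"
    by (rule sum_telescoping_recurrence[where G = "\<lambda>k. (2 * of_nat k + c - 1) * hg_cert c u n k"],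
        rule weighted_hg_term_recurrence)
       (use hc hu in \<open>simp_all add: hg_term_eq_0 hg_cert_def\<close>)
  also have "(\<Sum>k=0..n. (c + 2 * of_nat k) * hg_term c u n k) =
    c * (pochhammer (c + 1) n * pochhammer (u - c / 2 - 1 / 2) n / (pochhammer (c / 2 + 1 / 2) n * pochhammer u n))"
    using Suc by simp
  finally show ?case
    by (simp only: pochhammer_Suc divide_mult_mult_mult) (simp only: mult_ac)
qed

definition F32_term :: "complex \<Rightarrow> complex \<Rightarrow> nat \<Rightarrow> nat \<Rightarrow> complex" where
  "F32_term c u n k = pochhammer (- of_nat n) k * pochhammer (c + 1 - u) k * pochhammer c k /
     (fact k * pochhammer u k * pochhammer (c + of_nat n) k)"

definition F32_closed_part :: "complex \<Rightarrow> complex \<Rightarrow> nat \<Rightarrow> complex \<Rightarrow> complex \<Rightarrow> complex" where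
  "F32_closed_part c u n a b =
     4 ^ n / 2 * pochhammer a n * pochhammer (u - b) n / (pochhammer u n * pochhammer (c + of_nat n) n)"

definition F32_closed :: "complex \<Rightarrow> complex \<Rightarrow> nat \<Rightarrow> complex" where
  "F32_closed c u n = F32_closed_part c u n (c / 2 + 1 / 2) (c / 2) + F32_closed_part c u n (c / 2) (c / 2 + 1 / 2)"

lemma F32_term_eq_hg_term:
  assumes "c + of_nat n \<noteq> 0" "c + of_nat n + of_nat k \<noteq> 0"
  shows "F32_term c u n k = hg_term c u n k * (c + of_nat n + of_nat k) / (c + of_nat n)"
proof -
  have "pochhammer (c + of_nat n) k * (c + of_nat n + of_nat k) = (c + of_nat n) * pochhammer (c + 1 + of_nat n) k"
    using pochhammer_shift_mult[of "c + of_nat n" k] by (simp add: algebra_simps)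
  then have e: "pochhammer (c + of_nat n) k = (c + of_nat n) * pochhammer (c + 1 + of_nat n) k / (c + of_nat n + of_nat k)"
    using assms(2) by (simp add: field_simps)
  show ?thesis
    using assms unfolding F32_term_def hg_term_def e
    by (cases "pochhammer (c + 1 + of_nat n) k = 0") (simp_all add: field_simps)
qed

lemma pochhammer_halves_neq_0:
  fixes c :: "'a :: field_char_0"
  assumes c: "\<And>j. j \<le> 2 * n \<Longrightarrow> c + of_nat j \<noteq> 0"
  shows "pochhammer (c / 2 + 1) n \<noteq> 0" "pochhammer (c / 2 + 1 / 2) n \<noteq> 0" "pochhammer (c + of_nat n) n \<noteq> 0"
proof -
  have "c / 2 + 1 + of_nat k \<noteq> 0" "c / 2 + 1 / 2 + of_nat k \<noteq> 0" "c + of_nat n + of_nat k \<noteq> 0" if "k < n" for k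
  proof -
    have e: "c / 2 + 1 + of_nat k = (c + of_nat (2 * k + 2)) / 2" "c / 2 + 1 / 2 + of_nat k = (c + of_nat (2 * k + 1)) / 2"
      "c + of_nat n + of_nat k = c + of_nat (n + k)"
      by (simp_all add: field_simps)
    show "c / 2 + 1 + of_nat k \<noteq> 0" "c / 2 + 1 / 2 + of_nat k \<noteq> 0" "c + of_nat n + of_nat k \<noteq> 0"
      unfolding e using c[of "2 * k + 2"] c[of "2 * k + 1"] c[of "n + k"] that by simp_all
  qed
  then show "pochhammer (c / 2 + 1) n \<noteq> 0" "pochhammer (c / 2 + 1 / 2) n \<noteq> 0" "pochhammer (c + of_nat n) n \<noteq> 0"
    unfolding pochhammer_neq_0_iff by blast+
qed

lemma F32_closed_eq_combination:
  assumes "c \<noteq> 0" "c + 2 * of_nat n \<noteq> 0" "c + of_nat n \<noteq> 0" "pochhammer (c / 2 + 1) n \<noteq> 0"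
    "pochhammer (c / 2 + 1 / 2) n \<noteq> 0" "pochhammer (c + of_nat n) n \<noteq> 0" "pochhammer u n \<noteq> 0"
  shows "((c + 2 * of_nat n) * (pochhammer (c + 1) n * pochhammer (u - c / 2) n / (pochhammer (c / 2 + 1) n * pochhammer u n)) +
      c * (pochhammer (c + 1) n * pochhammer (u - c / 2 - 1 / 2) n / (pochhammer (c / 2 + 1 / 2) n * pochhammer u n))) /
      (2 * (c + of_nat n)) = F32_closed c u n"
proof -
  define P R0 R1 R2 B where "P = pochhammer (c + 1) n" "R0 = pochhammer (c / 2) n"
    "R1 = pochhammer (c / 2 + 1) n" "R2 = pochhammer (c / 2 + 1 / 2) n" "B = pochhammer (c + of_nat n) n"
  define Q1 Q2 U where "Q1 = pochhammer (u - c / 2) n" "Q2 = pochhammer (u - (c / 2 + 1 / 2)) n" "U = pochhammer u n"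
  define X W where "X = c + 2 * of_nat n" "W = c + of_nat n"
  have "X * P * B = 4 ^ n * R2 * R1 * W" "c * P * B = 4 ^ n * R0 * R2 * W"
    unfolding P_R0_R1_R2_B_def X_W_def by (rule pochhammer_shift_double', rule pochhammer_shift_double)
  moreover have "X \<noteq> 0" "W \<noteq> 0" "R1 \<noteq> 0" "R2 \<noteq> 0" "B \<noteq> 0" "U \<noteq> 0"
    using assms unfolding P_R0_R1_R2_B_def Q1_Q2_U_def X_W_def by simp_all
  ultimately have "X * (P * Q1 / (R1 * U)) / (2 * W) = 4 ^ n / 2 * R2 * Q1 / (U * B)"
    "c * (P * Q2 / (R2 * U)) / (2 * W) = 4 ^ n / 2 * R0 * Q2 / (U * B)"
    using \<open>c \<noteq> 0\<close> by (simp_all add: field_simps)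
  then show ?thesis
    unfolding F32_closed_def F32_closed_part_def add_divide_distrib diff_diff_eq
    unfolding P_R0_R1_R2_B_def[symmetric] Q1_Q2_U_def[symmetric] unfolding X_W_def[symmetric]
    by simp
qed

lemma F32_sum_generic:
  assumes c: "\<And>j. j \<le> 2 * n \<Longrightarrow> c + of_nat j \<noteq> 0" and u: "\<And>j. j < n \<Longrightarrow> u + of_nat j \<noteq> 0"
  shows "(\<Sum>k=0..n. F32_term c u n k) = F32_closed c u n"
proof -
  have "c \<noteq> 0" "c + 2 * of_nat n \<noteq> 0" "c + of_nat n \<noteq> 0"
    using c[of 0] c[of "2 * n"] c[of n] by simp_all
  have "pochhammer (c / 2 + 1) n \<noteq> 0" "pochhammer (c / 2 + 1 / 2) n \<noteq> 0" "pochhammer (c + of_nat n) n \<noteq> 0"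
    by (rule pochhammer_halves_neq_0, fact c)+
  have "pochhammer u n \<noteq> 0"
    using u by (simp add: pochhammer_neq_0_iff)
  have "(\<Sum>k=0..n. F32_term c u n k) =
      (\<Sum>k=0..n. (c + 2 * of_nat n) * hg_term c u n k + (c + 2 * of_nat k) * hg_term c u n k) / (2 * (c + of_nat n))"
    unfolding sum_divide_distrib
  proof (rule sum.cong)
    fix k assume "k \<in> {0..n}"
    then have "c + of_nat n + of_nat k \<noteq> 0"
      using c[of "n + k"] by (simp add: add.assoc)
    moreover have "2 * (c + of_nat n) \<noteq> 0"
      using \<open>c + of_nat n \<noteq> 0\<close> by (simp only: mult_eq_0_iff) simp
    ultimately show "F32_term c u n k =
        ((c + 2 * of_nat n) * hg_term c u n k + (c + 2 * of_nat k) * hg_term c u n k) / (2 * (c + of_nat n))"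
      using \<open>c + of_nat n \<noteq> 0\<close> by (simp add: F32_term_eq_hg_term field_simps)
  qed simp
  also have "\<dots> = ((c + 2 * of_nat n) * (\<Sum>k=0..n. hg_term c u n k) + (\<Sum>k=0..n. (c + 2 * of_nat k) * hg_term c u n k)) /
      (2 * (c + of_nat n))"
    by (simp only: sum.distrib sum_distrib_left)
  also have "(\<Sum>k=0..n. hg_term c u n k) =
      pochhammer (c + 1) n * pochhammer (u - c / 2) n / (pochhammer (c / 2 + 1) n * pochhammer u n)"
    by (rule sum_hg_term) (use c u in simp_all)
  also have "(\<Sum>k=0..n. (c + 2 * of_nat k) * hg_term c u n k) =
      c * (pochhammer (c + 1) n * pochhammer (u - c / 2 - 1 / 2) n / (pochhammer (c / 2 + 1 / 2) n * pochhammer u n))"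
    by (rule sum_weighted_hg_term) (use c u in simp_all)
  also have "((c + 2 * of_nat n) *
        (pochhammer (c + 1) n * pochhammer (u - c / 2) n / (pochhammer (c / 2 + 1) n * pochhammer u n)) +
      c * (pochhammer (c + 1) n * pochhammer (u - c / 2 - 1 / 2) n / (pochhammer (c / 2 + 1 / 2) n * pochhammer u n))) /
      (2 * (c + of_nat n)) = F32_closed c u n"
    by (rule F32_closed_eq_combination) fact+
  finally show ?thesis .
qed

lemma F32_sum_eq_closed:
  assumes pu: "pochhammer u n \<noteq> 0" and pc: "pochhammer (c + of_nat n) n \<noteq> 0"
  shows "(\<Sum>k=0..n. F32_term c u n k) = F32_closed c u n"
proof (rule isCont_eq_off_finite[where f = "\<lambda>z. \<Sum>k=0..n. F32_term z u n k" and g = "\<lambda>z. F32_closed z u n"])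
  have "pochhammer (c + of_nat n) k \<noteq> 0" if "k \<le> n" for k
    using pochhammer_neq_0_mono[OF pc that] .
  with pu pc show "isCont (\<lambda>z. \<Sum>k=0..n. F32_term z u n k) c" "isCont (\<lambda>z. F32_closed z u n) c"
    unfolding F32_term_def F32_closed_def F32_closed_part_def
    by (auto intro!: continuous_intros isCont_o2[OF _ isCont_pochhammer] dest: pochhammer_neq_0_mono)
  show "finite ((\<lambda>j. - of_nat j) ` {..2 * n})"
    by simp
  show "(\<Sum>k=0..n. F32_term z u n k) = F32_closed z u n" if "z \<notin> (\<lambda>j. - of_nat j) ` {..2 * n}" for z
  proof (rule F32_sum_generic)
    show "z + of_nat j \<noteq> 0" if "j \<le> 2 * n" for j
    proof
      assume "z + of_nat j = 0"
      then have "z = - of_nat j"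
        by (simp add: eq_neg_iff_add_eq_0)
      with \<open>z \<notin> _\<close> that show False
        by auto
    qed
    show "u + of_nat j \<noteq> 0" if "j < n" for j
      using pu that by (simp add: pochhammer_neq_0_iff)
  qed
qed

lemma H_Suc: "H (Suc m) y = H m y + 1 / (y + of_nat (Suc m))"
  unfolding H_def by simp

lemma H_double: "H (2 * k) x = (H k (x / 2) + H k ((x - 1) / 2)) / 2"
proof (induction k)
  case 0
  then show ?case by (simp add: H_def)
next
  case (Suc k)
  have "x / 2 + of_nat (Suc k) = (x + of_nat (Suc (Suc (2 * k)))) / 2"
    "(x - 1) / 2 + of_nat (Suc k) = (x + of_nat (Suc (2 * k))) / 2"
    by (simp_all add: field_simps)
  with Suc.IH show ?case
    by (simp add: H_Suc add_divide_distrib del: of_nat_Suc)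
qed

(* The logarithmic derivative f'/f, stated without dividing by f z. *)
definition has_log_derivative :: "(complex \<Rightarrow> complex) \<Rightarrow> complex \<Rightarrow> complex \<Rightarrow> bool" where
  "has_log_derivative f s z \<longleftrightarrow> (f has_field_derivative f z * s) (at z)"

lemma has_log_derivative_const: "has_log_derivative (\<lambda>e. a) 0 z"
  unfolding has_log_derivative_def by simp

lemma has_log_derivative_mult:
  "has_log_derivative f s z \<Longrightarrow> has_log_derivative g t z \<Longrightarrow> has_log_derivative (\<lambda>e. f e * g e) (s + t) z"
  unfolding has_log_derivative_def by (drule (1) DERIV_mult) (simp add: algebra_simps)

lemma has_log_derivative_divide:
  assumes "has_log_derivative f s z" "has_log_derivative g t z" "g z \<noteq> 0"
  shows "has_log_derivative (\<lambda>e. f e / g e) (s - t) z"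
proof -
  have "((\<lambda>e. f e / g e) has_field_derivative (f z * s * g z - f z * (g z * t)) / (g z * g z)) (at z)"
    using assms unfolding has_log_derivative_def by (intro DERIV_divide) auto
  moreover have "(f z * s * g z - f z * (g z * t)) / (g z * g z) = f z / g z * (s - t)"
    using assms(3) by (simp add: field_simps)
  ultimately show ?thesis
    unfolding has_log_derivative_def by simp
qed

lemma has_log_derivative_pochhammer:
  assumes "(f has_field_derivative b) (at z)" "pochhammer (f z) k \<noteq> 0"
  shows "has_log_derivative (\<lambda>e. pochhammer (f e) k) (b * H k (f z - 1)) z"
  using assms(2)
proof (induction k)
  case 0
  then show ?case by (simp add: has_log_derivative_def H_def)
next
  case (Suc k)
  then have "pochhammer (f z) k \<noteq> 0" "f z + of_nat k \<noteq> 0"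
    by (simp_all add: pochhammer_Suc)
  have "has_log_derivative (\<lambda>e. f e + of_nat k) (b / (f z + of_nat k)) z"
    unfolding has_log_derivative_def using assms(1) \<open>f z + of_nat k \<noteq> 0\<close>
    by (auto intro!: derivative_eq_intros)
  from has_log_derivative_mult[OF Suc.IH[OF \<open>pochhammer (f z) k \<noteq> 0\<close>] this]
  show ?case
    by (simp add: pochhammer_Suc H_Suc distrib_left add_divide_distrib algebra_simps)
qed

lemma F32_term_log_derivative:
  assumes "pochhammer (c + 1 - u) k \<noteq> 0" "pochhammer u k \<noteq> 0" "pochhammer (c + of_nat n) k \<noteq> 0"
  shows "has_log_derivative (\<lambda>e. F32_term c (u - e) n k) (H k (c - u) + H k (u - 1)) 0"
proof -
  have "has_log_derivative (\<lambda>e. pochhammer (c + 1 - (u - e)) k) (1 * H k (c + 1 - (u - 0) - 1)) 0"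
    by (rule has_log_derivative_pochhammer) (use assms(1) in \<open>auto intro!: derivative_eq_intros\<close>)
  moreover have "has_log_derivative (\<lambda>e. pochhammer (u - e) k) (- 1 * H k (u - 0 - 1)) 0"
    by (rule has_log_derivative_pochhammer) (use assms(2) in \<open>auto intro!: derivative_eq_intros\<close>)
  ultimately have "has_log_derivative (\<lambda>e. F32_term c (u - e) n k)
      ((0 + 1 * H k (c + 1 - (u - 0) - 1) + 0) - (0 + - 1 * H k (u - 0 - 1) + 0)) 0"
    unfolding F32_term_def using assms
    by (intro has_log_derivative_divide has_log_derivative_mult has_log_derivative_const) auto
  then show ?thesis
    by simp
qed

lemma F32_closed_part_log_derivative:
  assumes "pochhammer (u - b) n \<noteq> 0" "pochhammer u n \<noteq> 0" "pochhammer (c + of_nat n) n \<noteq> 0"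
  shows "has_log_derivative (\<lambda>e. F32_closed_part c (u - e) n a b) (H n (u - 1) - H n (u - b - 1)) 0"
proof -
  have "has_log_derivative (\<lambda>e. pochhammer (u - e - b) n) (- 1 * H n (u - 0 - b - 1)) 0"
    by (rule has_log_derivative_pochhammer) (use assms(1) in \<open>auto intro!: derivative_eq_intros\<close>)
  moreover have "has_log_derivative (\<lambda>e. pochhammer (u - e) n) (- 1 * H n (u - 0 - 1)) 0"
    by (rule has_log_derivative_pochhammer) (use assms(2) in \<open>auto intro!: derivative_eq_intros\<close>)
  ultimately have "has_log_derivative (\<lambda>e. F32_closed_part c (u - e) n a b)
      ((0 + - 1 * H n (u - 0 - b - 1)) - (- 1 * H n (u - 0 - 1) + 0)) 0"
    unfolding F32_closed_part_def using assms
    by (intro has_log_derivative_divide has_log_derivative_mult has_log_derivative_const) auto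
  then show ?thesis
    by simp
qed

lemma F32_harmonic_identity:
  assumes "pochhammer (c + 1 - u) n \<noteq> 0" "pochhammer u n \<noteq> 0" "pochhammer (c + of_nat n) n \<noteq> 0"
    "pochhammer (u - c / 2) n \<noteq> 0" "pochhammer (u - (c / 2 + 1 / 2)) n \<noteq> 0"
  shows "(\<Sum>k=0..n. F32_term c u n k * (H k (c - u) + H k (u - 1))) =
    F32_closed_part c u n (c / 2 + 1 / 2) (c / 2) * (H n (u - 1) - H n (u - c / 2 - 1)) +
    F32_closed_part c u n (c / 2) (c / 2 + 1 / 2) * (H n (u - 1) - H n (u - (c / 2 + 1 / 2) - 1))"
proof -
  have "isCont (\<lambda>e. pochhammer (u - e) n) 0"
    by (intro continuous_intros isCont_o2[OF _ isCont_pochhammer])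
  then have "((\<lambda>e. pochhammer (u - e) n) \<longlongrightarrow> pochhammer (u - 0) n) (nhds 0)"
    unfolding isCont_def by (rule tendsto_at_iff_tendsto_nhds[THEN iffD1])
  then have "eventually (\<lambda>e. pochhammer (u - e) n \<noteq> 0) (nhds 0)"
    using assms(2) by (intro tendsto_imp_eventually_ne) auto
  then have ev: "eventually (\<lambda>e. (\<Sum>k=0..n. F32_term c (u - e) n k) = F32_closed c (u - e) n) (nhds 0)"
    by (rule eventually_mono) (use F32_sum_eq_closed assms(3) in blast)
  have "((\<lambda>e. \<Sum>k=0..n. F32_term c (u - e) n k) has_field_derivative
      (\<Sum>k=0..n. F32_term c u n k * (H k (c - u) + H k (u - 1)))) (at 0)"
  proof (rule DERIV_sum)
    fix k assume "k \<in> {0..n}"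
    then have "pochhammer (c + 1 - u) k \<noteq> 0" "pochhammer u k \<noteq> 0" "pochhammer (c + of_nat n) k \<noteq> 0"
      using pochhammer_neq_0_mono[OF assms(1)] pochhammer_neq_0_mono[OF assms(2)]
        pochhammer_neq_0_mono[OF assms(3)] by auto
    from F32_term_log_derivative[OF this]
    show "((\<lambda>e. F32_term c (u - e) n k) has_field_derivative F32_term c u n k * (H k (c - u) + H k (u - 1))) (at 0)"
      unfolding has_log_derivative_def by simp
  qed
  moreover have "((\<lambda>e. F32_closed c (u - e) n) has_field_derivative
      F32_closed_part c u n (c / 2 + 1 / 2) (c / 2) * (H n (u - 1) - H n (u - c / 2 - 1)) +
      F32_closed_part c u n (c / 2) (c / 2 + 1 / 2) * (H n (u - 1) - H n (u - (c / 2 + 1 / 2) - 1))) (at 0)"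
    unfolding F32_closed_def
    using F32_closed_part_log_derivative[of u "c / 2" n c "c / 2 + 1 / 2"]
      F32_closed_part_log_derivative[of u "c / 2 + 1 / 2" n c "c / 2"] assms(2-5)
    unfolding has_log_derivative_def by (intro DERIV_add) auto
  ultimately show ?thesis
    unfolding DERIV_cong_ev[OF refl ev refl] by (rule DERIV_unique)
qed

lemma pochhammer_quarter_neq_0: "pochhammer (1 / 4 :: complex) n \<noteq> 0" "pochhammer (- 1 / 4 :: complex) n \<noteq> 0"
proof -
  have "Re (1 / 4 + of_nat k :: complex) \<noteq> 0" "Re (- 1 / 4 + of_nat k :: complex) \<noteq> 0" for k
    by (simp, cases k) auto
  then have "1 / 4 + of_nat k \<noteq> (0 :: complex)" "- 1 / 4 + of_nat k \<noteq> (0 :: complex)" for k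
    by (metis zero_complex.sel(1))+
  then show "pochhammer (1 / 4 :: complex) n \<noteq> 0" "pochhammer (- 1 / 4 :: complex) n \<noteq> 0"
    unfolding pochhammer_neq_0_iff by blast+
qed

lemma harmonic_F32_closed_form:
  fixes x :: complex
  assumes "pochhammer (x / 2 + 1) n \<noteq> 0" "pochhammer ((x + 1) / 2) n \<noteq> 0"
    "pochhammer (x + 1 / 2 + of_nat n) n \<noteq> 0"
  shows "(\<Sum>k=0..n. F32_term (x + 1 / 2) ((x + 1) / 2) n k * H (2 * k) x) =
    4 ^ n / 4 * (pochhammer (x / 2 + 3 / 4) n * pochhammer (1 / 4) n) /
      (pochhammer ((x + 1) / 2) n * pochhammer (x + 1 / 2 + of_nat n) n) * (H n ((x - 1) / 2) - H n (- 3 / 4))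
    + 4 ^ n / 4 * (pochhammer (x / 2 + 1 / 4) n * pochhammer (- 1 / 4) n) /
      (pochhammer ((x + 1) / 2) n * pochhammer (x + 1 / 2 + of_nat n) n) * (H n ((x - 1) / 2) - H n (- 5 / 4))"
proof -
  define c u where "c = x + 1 / 2" and "u = (x + 1) / 2"
  have params: "c + 1 - u = x / 2 + 1" "c - u = x / 2" "u - 1 = (x - 1) / 2" "c + of_nat n = x + 1 / 2 + of_nat n"
    "u - c / 2 = 1 / 4" "u - (c / 2 + 1 / 2) = - 1 / 4" "c / 2 + 1 / 2 = x / 2 + 3 / 4" "c / 2 = x / 2 + 1 / 4"
    "u - c / 2 - 1 = - 3 / 4" "u - (c / 2 + 1 / 2) - 1 = - 5 / 4"
    unfolding c_def u_def by (simp_all add: field_simps)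
  note pochhammer_quarter_neq_0
  then have "pochhammer (c + 1 - u) n \<noteq> 0" "pochhammer u n \<noteq> 0" "pochhammer (c + of_nat n) n \<noteq> 0"
    "pochhammer (u - c / 2) n \<noteq> 0" "pochhammer (u - (c / 2 + 1 / 2)) n \<noteq> 0"
    unfolding params(1,4,5,6) using assms by (simp_all add: u_def)
  note identity = F32_harmonic_identity[OF this, unfolded params(9,10)]
  have part1: "F32_closed_part c u n (c / 2 + 1 / 2) (c / 2) = 4 ^ n / 2 * pochhammer (x / 2 + 3 / 4) n *
      pochhammer (1 / 4) n / (pochhammer ((x + 1) / 2) n * pochhammer (x + 1 / 2 + of_nat n) n)"
    unfolding F32_closed_part_def params(4,5,7) unfolding u_def ..
  have part2: "F32_closed_part c u n (c / 2) (c / 2 + 1 / 2) = 4 ^ n / 2 * pochhammer (x / 2 + 1 / 4) n *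
      pochhammer (- 1 / 4) n / (pochhammer ((x + 1) / 2) n * pochhammer (x + 1 / 2 + of_nat n) n)"
    unfolding F32_closed_part_def params(4,6) unfolding params(8) u_def ..
  have halve: "(4 ^ n / 2 * a * a' / b * X + 4 ^ n / 2 * d * d' / b * Y) / 2 =
      4 ^ n / 4 * (a * a') / b * X + 4 ^ n / 4 * (d * d') / b * Y" for a a' b d d' X Y :: complex
    by (simp add: divide_simps)
  have "(\<Sum>k=0..n. F32_term (x + 1 / 2) ((x + 1) / 2) n k * H (2 * k) x) =
      (\<Sum>k=0..n. F32_term c u n k * (H k (c - u) + H k (u - 1))) / 2"
    unfolding H_double params(2,3) sum_divide_distrib unfolding c_def u_def by simp
  also have "\<dots> = (F32_closed_part c u n (c / 2 + 1 / 2) (c / 2) * (H n (u - 1) - H n (- 3 / 4)) +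
      F32_closed_part c u n (c / 2) (c / 2 + 1 / 2) * (H n (u - 1) - H n (- 5 / 4))) / 2"
    unfolding identity ..
  finally show ?thesis
    unfolding part1 part2 params(3) halve .
qed

theorem theorem4:
  fixes n :: nat and x :: complex
  assumes hx: "\<And>j. 1 \<le> j \<Longrightarrow> j \<le> 2 * n \<Longrightarrow> x + of_nat j \<noteq> 0"
    and hx2: "\<And>j. 1 \<le> j \<Longrightarrow> j \<le> n \<Longrightarrow> (x - 1) / 2 + of_nat j \<noteq> 0"
    and hd1: "\<And>k. k \<le> n \<Longrightarrow> ((x - 1) / 2 + of_nat k) gchoose k \<noteq> 0"
    and hd2: "\<And>k. k \<le> n \<Longrightarrow> (x - 1 / 2 + of_nat n + of_nat k) gchoose k \<noteq> 0"
  shows "(\<Sum>k=0..n. (-1) ^ k * of_nat (n choose k) *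
            (((x / 2 + of_nat k) gchoose k) * ((x - 1 / 2 + of_nat k) gchoose k)) /
            ((((x - 1) / 2 + of_nat k) gchoose k) * ((x - 1 / 2 + of_nat n + of_nat k) gchoose k))
            * H (2 * k) x)
       = 4 powi (int n - 1) *
           (((x / 2 - 1 / 4 + of_nat n) gchoose n) * ((- 3 / 4 + of_nat n) gchoose n)) /
           ((((x - 1) / 2 + of_nat n) gchoose n) * ((x - 1 / 2 + 2 * of_nat n) gchoose n))
           * (H n ((x - 1) / 2) - H n (- 3 / 4))
       + 4 powi (int n - 1) *
           (((x / 2 - 3 / 4 + of_nat n) gchoose n) * ((- 5 / 4 + of_nat n) gchoose n)) /
           ((((x - 1) / 2 + of_nat n) gchoose n) * ((x - 1 / 2 + 2 * of_nat n) gchoose n))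
           * (H n ((x - 1) / 2) - H n (- 5 / 4))"
proof -
  have args: "x / 2 - 1 / 4 + 1 = x / 2 + 3 / 4" "- 3 / 4 + 1 = (1 / 4 :: complex)" "(x - 1) / 2 + 1 = (x + 1) / 2"
    "x - 1 / 2 + of_nat n + 1 = x + 1 / 2 + of_nat n" "x / 2 - 3 / 4 + 1 = x / 2 + 1 / 4" "- 5 / 4 + 1 = (- 1 / 4 :: complex)"
    "x - 1 / 2 + 1 = x + 1 / 2" "x + 1 / 2 + 1 - (x + 1) / 2 = x / 2 + 1" "x - 1 / 2 + 2 * of_nat n = x - 1 / 2 + of_nat n + of_nat n"
    by (simp_all add: field_simps)
  have nz1: "pochhammer (x / 2 + 1) n \<noteq> 0"
    unfolding pochhammer_neq_0_iff
  proof (intro allI impI)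
    fix k assume "k < n"
    with hx[of "2 * k + 2"] show "x / 2 + 1 + of_nat k \<noteq> 0"
      by (simp add: field_simps)
  qed
  have nz2: "pochhammer ((x + 1) / 2) n \<noteq> 0" "pochhammer (x + 1 / 2 + of_nat n) n \<noteq> 0"
    using hd1[of n] hd2[of n] unfolding gbinomial_add_of_nat args(3,4) by simp_all
  note closed_form = harmonic_F32_closed_form[OF nz1 nz2]
  have summand: "(-1) ^ k * of_nat (n choose k) *
            (((x / 2 + of_nat k) gchoose k) * ((x - 1 / 2 + of_nat k) gchoose k)) /
            ((((x - 1) / 2 + of_nat k) gchoose k) * ((x - 1 / 2 + of_nat n + of_nat k) gchoose k)) =
        F32_term (x + 1 / 2) ((x + 1) / 2) n k" for k
    unfolding gchoose_quotient minus_one_power_binomial F32_term_def args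
    by (simp add: mult_ac)
  have power: "4 powi (int n - 1) = (4 :: complex) ^ n / 4"
    by (simp add: power_int_diff)
  show ?thesis
    unfolding summand unfolding gchoose_quotient args power by (rule closed_form)
qed

end
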